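(* Let $X$ be a metric space and $Y$ be a uniformly locally finite metric space. Every uniformly finite-to-one coarse quotient map $f:X\to Y$ is uniformly coarsely finite-to-one, i.e. coarsely $n$-to-1 for some $n\in\mathbb N$.
   Context: U.l.f.: for every $r>0$, $\sup_{y}|B(y,r)|<\infty$. $f$ is uniformly finite-to-one if $\sup_{y\in Y}|f^{-1}(y)|<\infty$. Coarse quotient: $f$ is coarse ($\sup\{\partial(f(x),f(y)):d(x,y)\le t\}<\infty$ for all $t$) and there is $K>0$ such that for every $\varepsilon>0$ there is $\delta>0$ with $B(f(x),\varepsilon)\subset f(B(x,\delta))^K$ for all $x$ (closed balls, $A^K=\{y:\partial(y,A)\le K\}$). For $n\in\mathbb N$, $f$ is coarsely $n$-to-1 if for each $s>0$ there is $r>0$ such that for every $B\subset Y$ with $\mathrm{diam}(B)\le s$ there are $A_1,\dots,A_n\subset X$ with $\mathrm{diam}(A_i)\le r$ and $f^{-1}(B)\subset\bigcup_{i=1}^nA_i$. *)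

theory Defs
  imports "HOL-Analysis.Analysis"
begin

definition unif_locally_finite :: "'b::metric_space set \<Rightarrow> bool" where
  "unif_locally_finite (Y::'b set) \<longleftrightarrow>
     (\<forall>r>0. \<exists>N::nat. \<forall>y::'b. finite (cball y r) \<and> card (cball y r) \<le> N)"

definition unif_finite_to_one :: "('a \<Rightarrow> 'b) \<Rightarrow> bool" where
  "unif_finite_to_one f \<longleftrightarrow> (\<exists>N::nat. \<forall>y. finite (f -` {y}) \<and> card (f -` {y}) \<le> N)"

definition coarse_map :: "('a::metric_space \<Rightarrow> 'b::metric_space) \<Rightarrow> bool" where
  "coarse_map f \<longleftrightarrow> (\<forall>t. \<exists>S. \<forall>x y. dist x y \<le> t \<longrightarrow> dist (f x) (f y) \<le> S)"

definition thicken :: "'b::metric_space set \<Rightarrow> real \<Rightarrow> 'b set" where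
  "thicken A K = {y. infdist y A \<le> K}"

definition coarse_quotient :: "('a::metric_space \<Rightarrow> 'b::metric_space) \<Rightarrow> bool" where
  "coarse_quotient f \<longleftrightarrow> coarse_map f \<and>
     (\<exists>K>0. \<forall>\<epsilon>>0. \<exists>\<delta>>0. \<forall>x. cball (f x) \<epsilon> \<subseteq> thicken (f ` cball x \<delta>) K)"

text \<open>diam A \<le> s, written out (also meaningful for empty or unbounded A).\<close>
definition diam_le :: "'a::metric_space set \<Rightarrow> real \<Rightarrow> bool" where
  "diam_le A s \<longleftrightarrow> (\<forall>x\<in>A. \<forall>y\<in>A. dist x y \<le> s)"

definition coarsely_n_to_1 :: "('a::metric_space \<Rightarrow> 'b::metric_space) \<Rightarrow> nat \<Rightarrow> bool" where
  "coarsely_n_to_1 f n \<longleftrightarrow>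
     (\<forall>s>0. \<exists>r>0. \<forall>B. diam_le B s \<longrightarrow>
        (\<exists>A::nat \<Rightarrow> 'a set. (\<forall>i<n. diam_le (A i) r) \<and> f -` B \<subseteq> (\<Union>i<n. A i)))"

end

theory Submission
  imports Defs
begin

text \<open>
  Fix the constant \<open>K\<close> of the coarse quotient map \<open>f\<close> and, for a scale \<open>s\<close>, the corresponding
  \<open>\<delta>\<close>. If \<open>B\<close> has diameter at most \<open>s\<close> and \<open>y \<in> B\<close>, then for every \<open>x \<in> f\<^sup>-\<^sup>1(B)\<close> the point \<open>y\<close>
  lies in the \<open>K\<close>-neighbourhood of \<open>f(B(x,\<delta>))\<close>, so (the infimum need not be attained)
  some \<open>x'\<close> within \<open>\<delta>\<close> of \<open>x\<close> is mapped into \<open>B(y,K+1)\<close>. Hence \<open>f\<^sup>-\<^sup>1(B)\<close> is covered by the \<open>\<delta>\<close>-balls around the points of \<open>f\<^sup>-\<^sup>1(B(y,K+1))\<close>,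
  and by uniform local finiteness of \<open>Y\<close> and uniform finiteness of the fibres the number of
  these points is bounded independently of \<open>s\<close>, \<open>B\<close> and \<open>y\<close>.
\<close>

lemma infdist_lessE:
  fixes x :: "'a::metric_space"
  assumes "A \<noteq> {}" "infdist x A < e"
  obtains a where "a \<in> A" "dist x a < e"
proof -
  have "(INF a\<in>A. dist x a) < e" using assms infdist_notempty by metis
  moreover have "bdd_below ((\<lambda>a. dist x a) ` A)" by (auto intro: bdd_belowI[of _ 0])
  ultimately show ?thesis using assms(1) that by (meson cINF_less_iff)
qed

lemma diam_le_cball: "diam_le (cball x \<delta>) (2 * \<delta>)"
  unfolding diam_le_def using dist_triangle3[of _ _ x] by (smt (verit) mem_cball)

lemma card_vimage_le_mult:
  assumes "finite S" and fibres: "\<And>y. finite (f -` {y}) \<and> card (f -` {y}) \<le> N"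
  shows "finite (f -` S)" "card (f -` S) \<le> card S * N"
proof -
  have eq: "f -` S = (\<Union>y\<in>S. f -` {y})" by auto
  show "finite (f -` S)" unfolding eq using assms by (intro finite_UN_I) auto
  have "card (f -` S) \<le> (\<Sum>y\<in>S. card (f -` {y}))"
    unfolding eq using assms by (intro card_UN_le) auto
  also have "\<dots> \<le> card S * N" using fibres sum_bounded_above[of S "\<lambda>y. card (f -` {y})" N] by auto
  finally show "card (f -` S) \<le> card S * N" .
qed

lemma unif_finite_to_one_vimage_cball_bounded:
  fixes f :: "'a \<Rightarrow> 'b::metric_space"
  assumes "unif_locally_finite (UNIV :: 'b set)" "unif_finite_to_one f" "r > 0"
  obtains n where "\<And>y. finite (f -` cball y r) \<and> card (f -` cball y r) \<le> n"
proof -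
  obtain N where N: "\<And>y. finite (f -` {y}) \<and> card (f -` {y}) \<le> N"
    using assms(2) unfolding unif_finite_to_one_def by blast
  obtain M where M: "\<And>y::'b. finite (cball y r) \<and> card (cball y r) \<le> M"
    using assms(1,3) unfolding unif_locally_finite_def by blast
  have "finite (f -` cball y r) \<and> card (f -` cball y r) \<le> M * N" for y
    using card_vimage_le_mult[of "cball y r" f N] M[of y] N
    by (meson dual_order.trans mult_le_mono1)
  then show ?thesis using that by blast
qed

lemma coarse_quotient_vimage_subset_balls:
  assumes lift: "\<And>x. cball (f x) s \<subseteq> thicken (f ` cball x \<delta>) K"
    and "\<delta> \<ge> 0" "diam_le B s" "y \<in> B"
  shows "f -` B \<subseteq> (\<Union>p\<in>f -` cball y (K + 1). cball p \<delta>)"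
proof
  fix x assume "x \<in> f -` B"
  then have "y \<in> cball (f x) s" using assms(3,4) unfolding diam_le_def by auto
  then have "infdist y (f ` cball x \<delta>) < K + 1" using lift[of x] unfolding thicken_def by auto
  moreover have "f ` cball x \<delta> \<noteq> {}" using \<open>\<delta> \<ge> 0\<close> by auto
  ultimately obtain z where "z \<in> f ` cball x \<delta>" "dist y z < K + 1"
    by (metis infdist_lessE)
  then obtain p where "p \<in> cball x \<delta>" "dist y (f p) < K + 1" by blast
  then show "x \<in> (\<Union>p\<in>f -` cball y (K + 1). cball p \<delta>)" by (auto simp: dist_commute)
qed

lemma coarsely_n_to_1I:
  assumes "\<And>s. s > 0 \<Longrightarrow> \<exists>\<delta>>0. \<forall>B. diam_le B s \<longrightarrow>
             (\<exists>P. finite P \<and> card P \<le> n \<and> f -` B \<subseteq> (\<Union>p\<in>P. cball p \<delta>))"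
  shows "coarsely_n_to_1 f n"
  unfolding coarsely_n_to_1_def
proof (intro allI impI)
  fix s :: real assume "s > 0"
  then obtain \<delta> where "\<delta> > 0" and cover: "\<And>B. diam_le B s \<Longrightarrow>
      \<exists>P. finite P \<and> card P \<le> n \<and> f -` B \<subseteq> (\<Union>p\<in>P. cball p \<delta>)"
    using assms by blast
  have "\<exists>A. (\<forall>i<n. diam_le (A i) (2 * \<delta>)) \<and> f -` B \<subseteq> (\<Union>i<n. A i)" if B: "diam_le B s" for B
  proof -
    obtain P where P: "finite P" "card P \<le> n" "f -` B \<subseteq> (\<Union>p\<in>P. cball p \<delta>)"
      using cover[OF B] by blast
    obtain h where "bij_betw h {..<card P} P"
      using ex_bij_betw_nat_finite[OF P(1)] lessThan_atLeast0 by metis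
    then have "P \<subseteq> h ` {..<n}"
      using P(2) bij_betw_imp_surj_on image_mono lessThan_subset_iff by metis
    then have "f -` B \<subseteq> (\<Union>i<n. cball (h i) \<delta>)" using P(3) by blast
    then show ?thesis using diam_le_cball by (intro exI[of _ "\<lambda>i. cball (h i) \<delta>"]) auto
  qed
  then show "\<exists>r>0. \<forall>B. diam_le B s \<longrightarrow>
      (\<exists>A. (\<forall>i<n. diam_le (A i) r) \<and> f -` B \<subseteq> (\<Union>i<n. A i))"
    using \<open>\<delta> > 0\<close> by (intro exI[of _ "2 * \<delta>"]) auto
qed

theorem proposition3p3:
  fixes f :: "'a::metric_space \<Rightarrow> 'b::metric_space"
  assumes "unif_locally_finite (UNIV :: 'b set)"
    and "unif_finite_to_one f"
    and "coarse_quotient f"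
  shows "\<exists>n::nat. coarsely_n_to_1 f n"
proof -
  obtain K where "K > 0" and lift: "\<And>s. s > 0 \<Longrightarrow>
      \<exists>\<delta>>0. \<forall>x. cball (f x) s \<subseteq> thicken (f ` cball x \<delta>) K"
    using assms(3) unfolding coarse_quotient_def by blast
  obtain n where n: "\<And>y. finite (f -` cball y (K + 1)) \<and> card (f -` cball y (K + 1)) \<le> n"
    using unif_finite_to_one_vimage_cball_bounded[OF assms(1,2), of "K + 1"] \<open>K > 0\<close> by auto
  have "coarsely_n_to_1 f n"
  proof (rule coarsely_n_to_1I)
    fix s :: real assume "s > 0"
    then obtain \<delta> where "\<delta> > 0" and lift_s: "\<And>x. cball (f x) s \<subseteq> thicken (f ` cball x \<delta>) K"
      using lift by blast
    have "\<exists>P. finite P \<and> card P \<le> n \<and> f -` B \<subseteq> (\<Union>p\<in>P. cball p \<delta>)"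
      if "diam_le B s" for B
    proof (cases "B = {}")
      case False
      then obtain y where "y \<in> B" by blast
      then have "f -` B \<subseteq> (\<Union>p\<in>f -` cball y (K + 1). cball p \<delta>)"
        using coarse_quotient_vimage_subset_balls[OF lift_s _ that] \<open>\<delta> > 0\<close> by simp
      then show ?thesis using n[of y] by blast
    qed auto
    then show "\<exists>\<delta>>0. \<forall>B. diam_le B s \<longrightarrow>
        (\<exists>P. finite P \<and> card P \<le> n \<and> f -` B \<subseteq> (\<Union>p\<in>P. cball p \<delta>))"
      using \<open>\<delta> > 0\<close> by blast
  qed
  then show ?thesis ..
qed

end
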